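(* Let $k\geq 0$ and $\mathcal{P}\subseteq\mathbb{Z}_{\geq0}$, working with formal power series over a commutative ring $R\supseteq\mathbb{Q}$. Then $$P^{k,\mathcal{P}}(u,z)=F^{k,\mathcal{P}}(u,z)\,e^{T^{k,\mathcal{P}}(u,z)}.$$
   Context: $[n]=\{1,\dots,n\}$. Labeled rooted tree: tree on vertex set $[m]$ with a distinguished root; children of $v$ are its neighbours farther from the root; the height of a vertex $v$ is the maximal distance from $v$ down to a leaf of its subtree; a tree satisfies $\mathcal{P}$ if each vertex has a number of children in $\mathcal{P}$. $T^{k,\mathcal{P}}(u,z)=\sum_t u^{\chi_k(t)}z^{|t|}/|t|!$ over all labeled rooted trees satisfying $\mathcal{P}$, $\chi_k(t)$ = number of vertices of height $<k$. $F^{k,\mathcal{P}}(u,z)=\sum_{n\ge0}\frac{z^n}{n!}\sum_f u^{\,n-|f^k([n])|}$ over functions $f:[n]\to[n]$ with $|f^{-1}(x)|\in\mathcal{P}$ for all $x$. $P^{k,\mathcal{P}}(u,z)$ is defined by the same formula but summing over partial functions $f$ on $[n]$ (maps from some subset $S\subseteq[n]$ into $[n]$) with $|f^{-1}(x)|\in\mathcal{P}$ for every $x\in[n]$; here $f^k([n])$ is the set of values $f^k(x)$ over $x$ at which $f^k$ is defined. $e^w=\sum w^n/n!$. *)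

theory Defs
  imports "HOL-Library.FuncSet" "HOL-Computational_Algebra.Polynomial" "HOL-Computational_Algebra.Formal_Power_Series"
begin

text \<open>Bivariate formal power series in u and z over R are represented as power series in z
  whose coefficients are polynomials in u, i.e. the type ('a poly) fps.  This is legitimate because
  every z-coefficient of the series below is a polynomial in u.\<close>

definition natinv :: "nat \<Rightarrow> 'a::comm_ring_1" where
  "natinv n = (THE x. of_nat n * x = 1)"

text \<open>Labeled rooted trees on [m]: a root r and a parent map p; p v is the parent of v for
  v \<noteq> r, p is 0 at the root and outside [m] (canonical representative), and every vertex
  reaches the root by following parents.\<close>
definition rooted_trees :: "nat \<Rightarrow> (nat \<times> (nat \<Rightarrow> nat)) set" where
  "rooted_trees m = {(r, p). r \<in> {1..m} \<and>
      (\<forall>v. v \<in> {1..m} - {r} \<longrightarrow> p v \<in> {1..m}) \<and>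
      (\<forall>v. v \<notin> {1..m} - {r} \<longrightarrow> p v = 0) \<and>
      (\<forall>v\<in>{1..m}. \<exists>n. (p ^^ n) v = r)}"

definition children :: "nat \<Rightarrow> (nat \<Rightarrow> nat) \<Rightarrow> nat \<Rightarrow> nat set" where
  "children m p v = {w \<in> {1..m}. p w = v}"

definition tree_height :: "nat \<Rightarrow> (nat \<Rightarrow> nat) \<Rightarrow> nat \<Rightarrow> nat" where
  "tree_height m p v = Max {n. \<exists>w\<in>{1..m}. (p ^^ n) w = v}"

definition chi :: "nat \<Rightarrow> nat \<Rightarrow> (nat \<Rightarrow> nat) \<Rightarrow> nat" where
  "chi k m p = card {v \<in> {1..m}. tree_height m p v < k}"

definition trees_P :: "nat set \<Rightarrow> nat \<Rightarrow> (nat \<times> (nat \<Rightarrow> nat)) set" where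
  "trees_P Ps m = {(r, p) \<in> rooted_trees m. \<forall>v\<in>{1..m}. card (children m p v) \<in> Ps}"

definition Tgf :: "nat \<Rightarrow> nat set \<Rightarrow> 'a::comm_ring_1 poly fps" where
  "Tgf k Ps = Abs_fps (\<lambda>m. smult (natinv (fact m))
       (\<Sum>t\<in>trees_P Ps m. monom 1 (chi k m (snd t))))"

definition funs_P :: "nat set \<Rightarrow> nat \<Rightarrow> (nat \<Rightarrow> nat) set" where
  "funs_P Ps n = {f \<in> {1..n} \<rightarrow>\<^sub>E {1..n}. \<forall>x\<in>{1..n}. card {y \<in> {1..n}. f y = x} \<in> Ps}"

definition Fgf :: "nat \<Rightarrow> nat set \<Rightarrow> 'a::comm_ring_1 poly fps" where
  "Fgf k Ps = Abs_fps (\<lambda>n. smult (natinv (fact n))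
       (\<Sum>f\<in>funs_P Ps n. monom 1 (n - card ((f ^^ k) ` {1..n}))))"

definition pfuns_P :: "nat set \<Rightarrow> nat \<Rightarrow> (nat \<Rightarrow> nat option) set" where
  "pfuns_P Ps n = {f. (\<forall>x. x \<notin> {1..n} \<longrightarrow> f x = None) \<and>
       (\<forall>x y. f x = Some y \<longrightarrow> y \<in> {1..n}) \<and>
       (\<forall>x\<in>{1..n}. card {y \<in> {1..n}. f y = Some x} \<in> Ps)}"

fun piter :: "(nat \<Rightarrow> nat option) \<Rightarrow> nat \<Rightarrow> nat \<Rightarrow> nat option" where
  "piter f 0 x = Some x"
| "piter f (Suc k) x = (case piter f k x of None \<Rightarrow> None | Some y \<Rightarrow> f y)"

definition pimage :: "(nat \<Rightarrow> nat option) \<Rightarrow> nat \<Rightarrow> nat \<Rightarrow> nat set" where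
  "pimage f k n = {y. \<exists>x\<in>{1..n}. piter f k x = Some y}"

definition Pgf :: "nat \<Rightarrow> nat set \<Rightarrow> 'a::comm_ring_1 poly fps" where
  "Pgf k Ps = Abs_fps (\<lambda>n. smult (natinv (fact n))
       (\<Sum>f\<in>pfuns_P Ps n. monom 1 (n - card (pimage f k n))))"

text \<open>e^A = \<Sum>_j A^j/j!, for A with zero constant term (terms j > m do not contribute to z^m).\<close>
definition fps_exp_of :: "'a::comm_ring_1 poly fps \<Rightarrow> 'a poly fps" where
  "fps_exp_of A = Abs_fps (\<lambda>m. \<Sum>j\<le>m. smult (natinv (fact j)) (fps_nth (A ^ j) m))"

end

(*
  Everything is phrased for partial maps f on a finite set A (nat \<rightharpoonup> nat, read as parent maps)
  whose fibres have sizes in P, weighted by u^(|A| - |f^k(A)|).  The points of A whose forward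
  orbit stays defined forever form an f-invariant set on which f is total, and on the remaining
  points f is a forest; a forest in turn splits into the tree containing a given vertex and the
  rest.  On a tree, a vertex lies outside f^k(A) exactly when its height is < k, so the weight
  is u^chi_k.  The weight is additive over these splittings and the counts only depend on the
  sizes of the parts, so the splittings are binomial convolutions: P = F G for the exponential
  generating function G of forests, and G' = T' G by removing the tree of the largest vertex.
  As e^T satisfies the same linear differential equation, has the same constant term 1, and
  multiplication by a positive integer is injective, G = e^T.
*)
theory Submission
  imports Defs
begin

unbundle fps_syntax

section \<open>Partial maps and their iterates\<close>

definition pfun_on :: "nat set \<Rightarrow> (nat \<rightharpoonup> nat) \<Rightarrow> bool" where
  "pfun_on A f \<longleftrightarrow> dom f \<subseteq> A \<and> ran f \<subseteq> A"

lemma pfun_on_iff: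
  "pfun_on A f \<longleftrightarrow> (\<forall>x. x \<notin> A \<longrightarrow> f x = None) \<and> (\<forall>x y. f x = Some y \<longrightarrow> y \<in> A)"
  unfolding pfun_on_def dom_def ran_def by auto

lemma pfun_on_None: "pfun_on A f \<Longrightarrow> x \<notin> A \<Longrightarrow> f x = None"
  by (simp add: pfun_on_iff)

lemma pfun_on_Some: "pfun_on A f \<Longrightarrow> f x = Some y \<Longrightarrow> x \<in> A \<and> y \<in> A"
  by (metis option.distinct(1) pfun_on_iff)

lemma finite_pfun_on: "finite A \<Longrightarrow> finite {f. pfun_on A f}"
proof -
  assume A: "finite A"
  have "{f. pfun_on A f} = (\<Union>D\<in>Pow A. {f. dom f = D \<and> ran f \<subseteq> A})"
    unfolding pfun_on_def by blast
  moreover have "finite {f. dom f = D \<and> ran f \<subseteq> A}" if "D \<in> Pow A" for D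
    using that A by (intro finite_set_of_finite_maps) (auto intro: finite_subset)
  ultimately show ?thesis
    using A by simp
qed

lemma piter_Suc_Some: "f x = Some y \<Longrightarrow> piter f (Suc n) x = piter f n y"
  by (induction n) auto

lemma piter_Suc_None: "f x = None \<Longrightarrow> piter f (Suc n) x = None"
  by (induction n) auto

lemma piter_add: "piter f (m + n) x = (case piter f n x of None \<Rightarrow> None | Some y \<Rightarrow> piter f m y)"
  by (induction m) (auto split: option.splits)

lemma piter_None_mono: "piter f n x = None \<Longrightarrow> n \<le> m \<Longrightarrow> piter f m x = None"
  by (induction m) (auto simp: le_Suc_eq)

lemma piter_None_imp_root: "piter f n x = None \<Longrightarrow> \<exists>i r. piter f i x = Some r \<and> f r = None"
  by (induction n) (auto split: option.splits)

lemma piter_root_unique: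
  assumes "piter f i x = Some r" "f r = None" "piter f j x = Some r'" "f r' = None"
  shows "r = r'"
proof -
  have "r = r'" if "piter f i x = Some r" "f r = None" "piter f j x = Some r'" "i \<le> j" for i j r r'
  proof -
    have "piter f (j - i) r = Some r'"
      using that piter_add[of f "j - i" i x] by simp
    then show ?thesis
      using \<open>f r = None\<close> piter_Suc_None by (cases "j - i") auto
  qed
  then show ?thesis
    using assms by (metis nat_le_linear)
qed

definition invariant :: "nat set \<Rightarrow> (nat \<rightharpoonup> nat) \<Rightarrow> bool" where
  "invariant D f \<longleftrightarrow> (\<forall>x\<in>D. \<forall>y. f x = Some y \<longrightarrow> y \<in> D)"

lemma pfun_on_invariant: "pfun_on A f \<Longrightarrow> invariant A f"
  unfolding invariant_def by (auto dest: pfun_on_Some)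

lemma pfun_on_restrict: "invariant D f \<Longrightarrow> pfun_on D (f |` D)"
  unfolding invariant_def pfun_on_iff restrict_map_def by auto

lemma piter_invariant: "invariant D f \<Longrightarrow> x \<in> D \<Longrightarrow> piter f n x = Some y \<Longrightarrow> y \<in> D"
proof (induction n arbitrary: y)
  case (Suc n)
  then obtain z where "piter f n x = Some z" "f z = Some y"
    by (auto split: option.splits)
  with Suc show ?case
    unfolding invariant_def by blast
qed simp

lemma piter_restrict:
  assumes "invariant D f" "x \<in> D"
  shows "piter (f |` D) n x = piter f n x"
proof (induction n)
  case (Suc n)
  then show ?case
    using piter_invariant[OF assms, of n] by (simp split: option.split)
qed simp

definition fibres_in :: "nat set \<Rightarrow> nat set \<Rightarrow> (nat \<rightharpoonup> nat) \<Rightarrow> bool" where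
  "fibres_in Ps A f \<longleftrightarrow> (\<forall>x\<in>A. card {y \<in> A. f y = Some x} \<in> Ps)"

definition iter_image :: "(nat \<rightharpoonup> nat) \<Rightarrow> nat \<Rightarrow> nat set \<Rightarrow> nat set" where
  "iter_image f k A = {y. \<exists>x\<in>A. piter f k x = Some y}"

definition weight :: "nat \<Rightarrow> nat set \<Rightarrow> (nat \<rightharpoonup> nat) \<Rightarrow> nat" where
  "weight k A f = card (A - iter_image f k A)"

definition is_total :: "nat set \<Rightarrow> (nat \<rightharpoonup> nat) \<Rightarrow> bool" where
  "is_total A f \<longleftrightarrow> A \<subseteq> dom f"

text \<open>A forest is encoded by its parent map; its roots are the points where the map is undefined.\<close>
definition is_forest :: "nat set \<Rightarrow> (nat \<rightharpoonup> nat) \<Rightarrow> bool" where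
  "is_forest A f \<longleftrightarrow> (\<forall>x\<in>A. \<exists>n. piter f n x = None)"

definition is_tree :: "nat set \<Rightarrow> (nat \<rightharpoonup> nat) \<Rightarrow> bool" where
  "is_tree A f \<longleftrightarrow> is_forest A f \<and> (\<exists>r\<in>A. f r = None \<and> (\<forall>x\<in>A. f x = None \<longrightarrow> x = r))"

definition pmaps :: "nat set \<Rightarrow> (nat set \<Rightarrow> (nat \<rightharpoonup> nat) \<Rightarrow> bool) \<Rightarrow> nat set \<Rightarrow> (nat \<rightharpoonup> nat) set" where
  "pmaps Ps Q A = {f. pfun_on A f \<and> fibres_in Ps A f \<and> Q A f}"

definition weight_enum ::
    "nat \<Rightarrow> nat set \<Rightarrow> (nat set \<Rightarrow> (nat \<rightharpoonup> nat) \<Rightarrow> bool) \<Rightarrow> nat set \<Rightarrow> 'a::comm_ring_1 poly" where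
  "weight_enum k Ps Q A = (\<Sum>f\<in>pmaps Ps Q A. monom 1 (weight k A f))"

lemma finite_pmaps: "finite A \<Longrightarrow> finite (pmaps Ps Q A)"
  unfolding pmaps_def by (rule finite_subset[OF _ finite_pfun_on]) auto

lemma iter_image_subset: "pfun_on A f \<Longrightarrow> iter_image f k A \<subseteq> A"
  unfolding iter_image_def by (auto dest: pfun_on_invariant piter_invariant)

lemma weight_eq:
  assumes "finite A" "pfun_on A f"
  shows "weight k A f = card A - card (iter_image f k A)"
proof -
  have "iter_image f k A \<subseteq> A"
    using iter_image_subset[OF assms(2)] .
  then show ?thesis
    unfolding weight_def using assms(1) by (simp add: card_Diff_subset finite_subset)
qed

section \<open>Splitting along invariant subsets\<close>

lemma fibre_restrict:
  assumes "D \<subseteq> A" "invariant (A - D) f" "x \<in> D"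
  shows "{y \<in> A. f y = Some x} = {y \<in> D. (f |` D) y = Some x}"
proof -
  have "y \<in> D" if "y \<in> A" "f y = Some x" for y
    using assms that unfolding invariant_def by blast
  then show ?thesis
    using assms(1) by auto
qed

context
  fixes A D :: "nat set" and f :: "nat \<rightharpoonup> nat"
  assumes pfun: "pfun_on A f" and sub: "D \<subseteq> A"
    and inv: "invariant D f" and inv_compl: "invariant (A - D) f"
begin

lemma map_add_restrict_split: "f |` D ++ f |` (A - D) = f"
  using pfun_on_None[OF pfun] sub
  by (auto simp: fun_eq_iff restrict_map_def map_add_def split: option.split)

lemma fibres_in_split:
  "fibres_in Ps A f \<longleftrightarrow> fibres_in Ps D (f |` D) \<and> fibres_in Ps (A - D) (f |` (A - D))"
proof -
  have "A - (A - D) = D"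
    using sub by blast
  then have fib_compl: "{y \<in> A. f y = Some x} = {y \<in> A - D. (f |` (A - D)) y = Some x}"
    if "x \<in> A - D" for x
    using fibre_restrict[of "A - D" A f x] inv that by auto
  have fib: "{y \<in> A. f y = Some x} = {y \<in> D. (f |` D) y = Some x}" if "x \<in> D" for x
    using fibre_restrict[OF sub inv_compl that] .
  have "fibres_in Ps A f \<longleftrightarrow>
      (\<forall>x\<in>D. card {y \<in> A. f y = Some x} \<in> Ps) \<and> (\<forall>x\<in>A - D. card {y \<in> A. f y = Some x} \<in> Ps)"
    unfolding fibres_in_def using sub by blast
  then show ?thesis
    unfolding fibres_in_def by (simp add: fib fib_compl del: Diff_iff)
qed

lemma iter_image_split:
  "iter_image f k A = iter_image (f |` D) k D \<union> iter_image (f |` (A - D)) k (A - D)"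
  unfolding iter_image_def using sub
  by (auto simp: piter_restrict[OF inv] piter_restrict[OF inv_compl])

lemma weight_split:
  assumes "finite A"
  shows "weight k A f = weight k D (f |` D) + weight k (A - D) (f |` (A - D))"
proof -
  let ?X = "D - iter_image (f |` D) k D" and ?Y = "(A - D) - iter_image (f |` (A - D)) k (A - D)"
  have "A - iter_image f k A = ?X \<union> ?Y"
    using iter_image_split sub iter_image_subset[OF pfun_on_restrict[OF inv]]
      iter_image_subset[OF pfun_on_restrict[OF inv_compl]] by blast
  moreover have "card (?X \<union> ?Y) = card ?X + card ?Y"
    using assms sub by (intro card_Un_disjoint) (auto intro: finite_subset)
  ultimately show ?thesis
    unfolding weight_def by simp
qed

lemma is_forest_split:
  "is_forest A f \<longleftrightarrow> is_forest D (f |` D) \<and> is_forest (A - D) (f |` (A - D))"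
  unfolding is_forest_def using sub
  by (auto simp: piter_restrict[OF inv] piter_restrict[OF inv_compl])

end

lemma pfun_on_map_add: "pfun_on D g \<Longrightarrow> pfun_on E h \<Longrightarrow> pfun_on (D \<union> E) (g ++ h)"
  unfolding pfun_on_iff map_add_def by (auto split: option.splits)

lemma map_add_comm_pfun_on: "pfun_on D g \<Longrightarrow> pfun_on E h \<Longrightarrow> D \<inter> E = {} \<Longrightarrow> g ++ h = h ++ g"
  unfolding pfun_on_def by (rule map_add_comm) blast

lemma restrict_map_add_left:
  "pfun_on D g \<Longrightarrow> pfun_on E h \<Longrightarrow> D \<inter> E = {} \<Longrightarrow> (g ++ h) |` D = g"
  by (auto simp: fun_eq_iff restrict_map_def map_add_def dest: pfun_on_None split: option.split)

lemma invariant_map_add_left: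
  "pfun_on D g \<Longrightarrow> pfun_on E h \<Longrightarrow> D \<inter> E = {} \<Longrightarrow> invariant D (g ++ h)"
  unfolding invariant_def
  by (auto simp: map_add_def dest: pfun_on_None pfun_on_Some split: option.splits)

lemma map_add_glue:
  assumes "D \<subseteq> A" and g: "pfun_on D g" and h: "pfun_on (A - D) h"
  shows "pfun_on A (g ++ h)" "invariant D (g ++ h)" "invariant (A - D) (g ++ h)"
    and "(g ++ h) |` D = g" "(g ++ h) |` (A - D) = h"
proof -
  have disj: "D \<inter> (A - D) = {}" "(A - D) \<inter> D = {}"
    by auto
  have comm: "g ++ h = h ++ g"
    using map_add_comm_pfun_on[OF g h disj(1)] .
  show "pfun_on A (g ++ h)"
    using pfun_on_map_add[OF g h] assms(1) by (simp add: Un_absorb1)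
  show "invariant D (g ++ h)" "(g ++ h) |` D = g"
    using invariant_map_add_left[OF g h disj(1)] restrict_map_add_left[OF g h disj(1)] .
  show "invariant (A - D) (g ++ h)" "(g ++ h) |` (A - D) = h"
    unfolding comm using invariant_map_add_left[OF h g disj(2)] restrict_map_add_left[OF h g disj(2)] .
qed

context
  fixes A :: "nat set" and \<D> :: "nat set set" and \<sigma> :: "(nat \<rightharpoonup> nat) \<Rightarrow> nat set"
    and Q Q\<^sub>1 Q\<^sub>2 :: "nat set \<Rightarrow> (nat \<rightharpoonup> nat) \<Rightarrow> bool"
  assumes parts: "\<D> \<subseteq> Pow A"
    and split: "\<And>f. pfun_on A f \<Longrightarrow> Q A f \<Longrightarrow>
      \<sigma> f \<in> \<D> \<and> invariant (\<sigma> f) f \<and> invariant (A - \<sigma> f) f \<and>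
      Q\<^sub>1 (\<sigma> f) (f |` \<sigma> f) \<and> Q\<^sub>2 (A - \<sigma> f) (f |` (A - \<sigma> f))"
    and glue: "\<And>D g h. D \<in> \<D> \<Longrightarrow> pfun_on D g \<Longrightarrow> pfun_on (A - D) h \<Longrightarrow>
      Q\<^sub>1 D g \<Longrightarrow> Q\<^sub>2 (A - D) h \<Longrightarrow> Q A (g ++ h) \<and> \<sigma> (g ++ h) = D"
begin

lemma restrict_split_mem:
  assumes "f \<in> pmaps Ps Q A"
  shows "(\<sigma> f, f |` \<sigma> f, f |` (A - \<sigma> f)) \<in> (SIGMA D:\<D>. pmaps Ps Q\<^sub>1 D \<times> pmaps Ps Q\<^sub>2 (A - D))"
    and "f |` \<sigma> f ++ f |` (A - \<sigma> f) = f"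
proof -
  from assms have f: "pfun_on A f" "fibres_in Ps A f" "Q A f"
    unfolding pmaps_def by auto
  with split parts have "\<sigma> f \<in> \<D>" "\<sigma> f \<subseteq> A" "invariant (\<sigma> f) f" "invariant (A - \<sigma> f) f"
    "Q\<^sub>1 (\<sigma> f) (f |` \<sigma> f)" "Q\<^sub>2 (A - \<sigma> f) (f |` (A - \<sigma> f))"
    by blast+
  with f show "(\<sigma> f, f |` \<sigma> f, f |` (A - \<sigma> f)) \<in> (SIGMA D:\<D>. pmaps Ps Q\<^sub>1 D \<times> pmaps Ps Q\<^sub>2 (A - D))"
    and "f |` \<sigma> f ++ f |` (A - \<sigma> f) = f"
    unfolding pmaps_def using fibres_in_split pfun_on_restrict map_add_restrict_split by simp_all
qed

lemma map_add_glue_mem: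
  assumes D: "D \<in> \<D>" and "g \<in> pmaps Ps Q\<^sub>1 D" "h \<in> pmaps Ps Q\<^sub>2 (A - D)"
  shows "g ++ h \<in> pmaps Ps Q A" "\<sigma> (g ++ h) = D" "(g ++ h) |` D = g" "(g ++ h) |` (A - D) = h"
proof -
  from assms have g: "pfun_on D g" "fibres_in Ps D g" "Q\<^sub>1 D g"
    and h: "pfun_on (A - D) h" "fibres_in Ps (A - D) h" "Q\<^sub>2 (A - D) h"
    unfolding pmaps_def by auto
  have "D \<subseteq> A"
    using D parts by blast
  note glued = map_add_glue[OF this g(1) h(1)]
  show "g ++ h \<in> pmaps Ps Q A" "\<sigma> (g ++ h) = D"
    unfolding pmaps_def using glue[OF D g(1) h(1) g(3) h(3)] glued g(2) h(2)
      fibres_in_split[OF glued(1) \<open>D \<subseteq> A\<close> glued(2,3)] by simp_all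
  show "(g ++ h) |` D = g" "(g ++ h) |` (A - D) = h"
    using glued(4,5) .
qed

lemma bij_betw_split:
  "bij_betw (\<lambda>f. (\<sigma> f, f |` \<sigma> f, f |` (A - \<sigma> f))) (pmaps Ps Q A)
     (SIGMA D:\<D>. pmaps Ps Q\<^sub>1 D \<times> pmaps Ps Q\<^sub>2 (A - D))"
proof (rule bij_betw_byWitness[where f' = "\<lambda>(D, g, h). g ++ h"])
  show "\<forall>f\<in>pmaps Ps Q A. (case (\<sigma> f, f |` \<sigma> f, f |` (A - \<sigma> f)) of (D, g, h) \<Rightarrow> g ++ h) = f"
    using restrict_split_mem(2) by simp
  show "(\<lambda>f. (\<sigma> f, f |` \<sigma> f, f |` (A - \<sigma> f))) ` pmaps Ps Q A
      \<subseteq> (SIGMA D:\<D>. pmaps Ps Q\<^sub>1 D \<times> pmaps Ps Q\<^sub>2 (A - D))"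
    using restrict_split_mem(1) by blast
  show "\<forall>p\<in>(SIGMA D:\<D>. pmaps Ps Q\<^sub>1 D \<times> pmaps Ps Q\<^sub>2 (A - D)).
      (\<lambda>f. (\<sigma> f, f |` \<sigma> f, f |` (A - \<sigma> f))) (case p of (D, g, h) \<Rightarrow> g ++ h) = p"
    and "(\<lambda>(D, g, h). g ++ h) ` (SIGMA D:\<D>. pmaps Ps Q\<^sub>1 D \<times> pmaps Ps Q\<^sub>2 (A - D)) \<subseteq> pmaps Ps Q A"
    using map_add_glue_mem by auto
qed

lemma weight_enum_split:
  assumes "finite A"
  shows "(weight_enum k Ps Q A :: 'a::comm_ring_1 poly) = (\<Sum>D\<in>\<D>. weight_enum k Ps Q\<^sub>1 D * weight_enum k Ps Q\<^sub>2 (A - D))"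
proof -
  define w :: "nat set \<times> (nat \<rightharpoonup> nat) \<times> (nat \<rightharpoonup> nat) \<Rightarrow> 'a poly"
    where "w = (\<lambda>(D, g, h). monom 1 (weight k D g) * monom 1 (weight k (A - D) h))"
  have "weight_enum k Ps Q A = (\<Sum>f\<in>pmaps Ps Q A. w (\<sigma> f, f |` \<sigma> f, f |` (A - \<sigma> f)))"
    unfolding weight_enum_def
  proof (intro sum.cong refl)
    fix f assume "f \<in> pmaps Ps Q A"
    then have "pfun_on A f" "Q A f"
      unfolding pmaps_def by auto
    with split parts have "\<sigma> f \<subseteq> A" "invariant (\<sigma> f) f" "invariant (A - \<sigma> f) f"
      by blast+
    with \<open>pfun_on A f\<close> have "weight k A f = weight k (\<sigma> f) (f |` \<sigma> f) + weight k (A - \<sigma> f) (f |` (A - \<sigma> f))"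
      using weight_split assms by blast
    then show "monom 1 (weight k A f) = w (\<sigma> f, f |` \<sigma> f, f |` (A - \<sigma> f))"
      unfolding w_def by (simp add: mult_monom)
  qed
  also have "\<dots> = sum w (SIGMA D:\<D>. pmaps Ps Q\<^sub>1 D \<times> pmaps Ps Q\<^sub>2 (A - D))"
    by (rule sum.reindex_bij_betw[OF bij_betw_split])
  also have "\<dots> = (\<Sum>D\<in>\<D>. \<Sum>p\<in>pmaps Ps Q\<^sub>1 D \<times> pmaps Ps Q\<^sub>2 (A - D). w (D, p))"
  proof -
    have "finite \<D>"
      using parts assms by (rule finite_subset[OF _ finite_Pow_iff[THEN iffD2]])
    moreover have "\<forall>D\<in>\<D>. finite (pmaps Ps Q\<^sub>1 D \<times> pmaps Ps Q\<^sub>2 (A - D))"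
      using parts assms by (auto intro!: finite_cartesian_product finite_pmaps intro: finite_subset)
    ultimately show ?thesis
      by (subst sum.Sigma) (simp_all only: case_prod_eta)
  qed
  also have "\<dots> = (\<Sum>D\<in>\<D>. weight_enum k Ps Q\<^sub>1 D * weight_enum k Ps Q\<^sub>2 (A - D))"
    unfolding weight_enum_def w_def sum_product sum.cartesian_product by simp
  finally show ?thesis .
qed

end

section \<open>Relabelling\<close>

definition relabel :: "(nat \<Rightarrow> nat) \<Rightarrow> nat set \<Rightarrow> (nat \<rightharpoonup> nat) \<Rightarrow> (nat \<rightharpoonup> nat)" where
  "relabel h A f = (\<lambda>y. if y \<in> h ` A then map_option h (f (inv_into A h y)) else None)"

lemma relabel_outside: "y \<notin> h ` A \<Longrightarrow> relabel h A f y = None"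
  unfolding relabel_def by simp

context
  fixes h :: "nat \<Rightarrow> nat" and A :: "nat set" and f :: "nat \<rightharpoonup> nat"
  assumes inj: "inj_on h A" and pfun: "pfun_on A f"
begin

lemma relabel_apply: "x \<in> A \<Longrightarrow> relabel h A f (h x) = map_option h (f x)"
  unfolding relabel_def using inj by simp

lemma pfun_on_relabel: "pfun_on (h ` A) (relabel h A f)"
  unfolding pfun_on_iff
proof (intro conjI allI impI)
  fix y z assume yz: "relabel h A f y = Some z"
  then have "y \<in> h ` A"
    using relabel_outside[of y h A f] by auto
  with yz obtain x where "x \<in> A" "y = h x" "relabel h A f (h x) = Some z"
    by blast
  then show "z \<in> h ` A"
    using relabel_apply pfun_on_Some[OF pfun] by auto
qed (rule relabel_outside)

lemma piter_relabel: "x \<in> A \<Longrightarrow> piter (relabel h A f) n (h x) = map_option h (piter f n x)"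
proof (induction n)
  case (Suc n)
  then show ?case
    using relabel_apply piter_invariant[OF pfun_on_invariant[OF pfun] Suc.prems]
    by (cases "piter f n x") auto
qed simp

lemma fibre_relabel:
  assumes "x \<in> A"
  shows "{y \<in> h ` A. relabel h A f y = Some (h x)} = h ` {y \<in> A. f y = Some x}"
proof
  show "{y \<in> h ` A. relabel h A f y = Some (h x)} \<subseteq> h ` {y \<in> A. f y = Some x}"
  proof clarify
    fix y assume y: "y \<in> A" "relabel h A f (h y) = Some (h x)"
    then obtain z where z: "f y = Some z" "h z = h x"
      using relabel_apply by auto
    then have "z = x"
      using pfun_on_Some[OF pfun] inj assms by (auto simp: inj_on_eq_iff)
    then show "h y \<in> h ` {y \<in> A. f y = Some x}"
      using y z by blast
  qed
  show "h ` {y \<in> A. f y = Some x} \<subseteq> {y \<in> h ` A. relabel h A f y = Some (h x)}"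
    using relabel_apply by auto
qed

lemma fibres_in_relabel: "fibres_in Ps (h ` A) (relabel h A f) \<longleftrightarrow> fibres_in Ps A f"
proof -
  have "card {y \<in> h ` A. relabel h A f y = Some (h x)} = card {y \<in> A. f y = Some x}" if "x \<in> A" for x
  proof -
    have "inj_on h {y \<in> A. f y = Some x}"
      using inj by (rule inj_on_subset) blast
    then show ?thesis
      unfolding fibre_relabel[OF that] by (rule card_image)
  qed
  moreover have "(\<forall>x\<in>h ` A. P x) \<longleftrightarrow> (\<forall>x\<in>A. P (h x))" for P
    by blast
  ultimately show ?thesis
    unfolding fibres_in_def by simp
qed

lemma iter_image_relabel: "iter_image (relabel h A f) k (h ` A) = h ` iter_image f k A"
  unfolding iter_image_def using piter_relabel by force

lemma weight_relabel: "weight k (h ` A) (relabel h A f) = weight k A f"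
proof -
  have "h ` A - h ` iter_image f k A = h ` (A - iter_image f k A)"
    using inj iter_image_subset[OF pfun] by (simp add: inj_on_image_set_diff)
  then show ?thesis
    unfolding weight_def iter_image_relabel using inj by (simp add: card_image inj_on_diff)
qed

lemma is_total_relabel: "is_total (h ` A) (relabel h A f) \<longleftrightarrow> is_total A f"
proof -
  have "h x \<in> dom (relabel h A f) \<longleftrightarrow> x \<in> dom f" if "x \<in> A" for x
    using relabel_apply[OF that] by (simp add: domIff)
  then show ?thesis
    unfolding is_total_def by blast
qed

lemma is_forest_relabel: "is_forest (h ` A) (relabel h A f) \<longleftrightarrow> is_forest A f"
  unfolding is_forest_def using piter_relabel by simp

lemma is_tree_relabel: "is_tree (h ` A) (relabel h A f) \<longleftrightarrow> is_tree A f"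
proof -
  have "(\<forall>x\<in>h ` A. relabel h A f x = None \<longrightarrow> x = h r) \<longleftrightarrow> (\<forall>x\<in>A. f x = None \<longrightarrow> x = r)"
    if "r \<in> A" for r
    using that inj relabel_apply by (auto simp: inj_on_eq_iff)
  then show ?thesis
    unfolding is_tree_def is_forest_relabel using relabel_apply by auto
qed

end

lemma relabel_relabel:
  assumes inj: "inj_on h A" and pfun: "pfun_on A f" and inverse: "\<And>x. x \<in> A \<Longrightarrow> h' (h x) = x"
  shows "relabel h' (h ` A) (relabel h A f) = f"
proof
  fix y
  have inj': "inj_on h' (h ` A)"
    using inverse by (intro inj_onI) (metis imageE)
  show "relabel h' (h ` A) (relabel h A f) y = f y"
  proof (cases "y \<in> A")
    case True
    have "relabel h' (h ` A) (relabel h A f) (h' (h y)) = map_option h' (relabel h A f (h y))"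
      using relabel_apply[OF inj' pfun_on_relabel[OF inj pfun]] True by simp
    also have "\<dots> = f y"
      using relabel_apply[OF inj pfun True] inverse pfun_on_Some[OF pfun] by (cases "f y") auto
    finally show ?thesis
      using inverse[OF True] by simp
  next
    case False
    then have "y \<notin> h' ` h ` A"
      using inverse by auto
    then show ?thesis
      using relabel_outside pfun_on_None[OF pfun False] by simp
  qed
qed

lemma bij_betw_relabel:
  assumes inj: "inj_on h A"
    and Q: "\<And>B h g. inj_on h B \<Longrightarrow> pfun_on B g \<Longrightarrow> Q (h ` B) (relabel h B g) \<longleftrightarrow> Q B g"
  shows "bij_betw (relabel h A) (pmaps Ps Q A) (pmaps Ps Q (h ` A))"
proof -
  let ?h' = "inv_into A h"
  have inj': "inj_on ?h' (h ` A)" and img: "?h' ` h ` A = A"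
    using inj by (simp_all add: inj_on_inv_into)
  have left_inv: "relabel ?h' (h ` A) (relabel h A f) = f" if "f \<in> pmaps Ps Q A" for f
  proof -
    have "pfun_on A f"
      using that unfolding pmaps_def by blast
    then show ?thesis
      by (rule relabel_relabel[OF inj]) (rule inv_into_f_f[OF inj])
  qed
  have right_inv: "relabel h A (relabel ?h' (h ` A) g) = g" if "g \<in> pmaps Ps Q (h ` A)" for g
  proof -
    have "pfun_on (h ` A) g"
      using that unfolding pmaps_def by blast
    then have "relabel h (?h' ` h ` A) (relabel ?h' (h ` A) g) = g"
      by (rule relabel_relabel[OF inj']) (rule f_inv_into_f)
    then show ?thesis
      unfolding img .
  qed
  have into: "relabel h A ` pmaps Ps Q A \<subseteq> pmaps Ps Q (h ` A)"
    using pfun_on_relabel[OF inj] fibres_in_relabel[OF inj] Q[OF inj]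
    unfolding pmaps_def by blast
  have onto: "relabel ?h' (h ` A) ` pmaps Ps Q (h ` A) \<subseteq> pmaps Ps Q A"
    using pfun_on_relabel[OF inj', unfolded img] fibres_in_relabel[OF inj', unfolded img]
      Q[OF inj', unfolded img]
    unfolding pmaps_def by blast
  show ?thesis
    using left_inv right_inv into onto
    by (intro bij_betw_byWitness[where f' = "relabel (inv_into A h) (h ` A)"]) blast+
qed

lemma weight_enum_relabel:
  assumes inj: "inj_on h A"
    and Q: "\<And>B h g. inj_on h B \<Longrightarrow> pfun_on B g \<Longrightarrow> Q (h ` B) (relabel h B g) \<longleftrightarrow> Q B g"
  shows "weight_enum k Ps Q (h ` A) = weight_enum k Ps Q A"
proof -
  have "weight_enum k Ps Q (h ` A) = (\<Sum>f\<in>pmaps Ps Q A. monom 1 (weight k (h ` A) (relabel h A f)))"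
    unfolding weight_enum_def by (rule sum.reindex_bij_betw[OF bij_betw_relabel[OF assms], symmetric])
  also have "\<dots> = weight_enum k Ps Q A"
    unfolding weight_enum_def
  proof (intro sum.cong refl)
    fix f assume "f \<in> pmaps Ps Q A"
    then show "monom 1 (weight k (h ` A) (relabel h A f)) = monom 1 (weight k A f)"
      unfolding pmaps_def using weight_relabel[OF inj] by simp
  qed
  finally show ?thesis .
qed

lemma weight_enum_card:
  assumes "finite A"
    and Q: "\<And>B h g. inj_on h B \<Longrightarrow> pfun_on B g \<Longrightarrow> Q (h ` B) (relabel h B g) \<longleftrightarrow> Q B g"
  shows "(weight_enum k Ps Q A :: 'a::comm_ring_1 poly) = weight_enum k Ps Q {1..card A}"
proof -
  have "card A = card {1..card A}"
    by simp
  then obtain h where "bij_betw h A {1..card A}"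
    using finite_same_card_bij[OF assms(1) finite_atLeastAtMost] by blast
  then have "inj_on h A" "h ` A = {1..card A}"
    unfolding bij_betw_def by auto
  then show ?thesis
    using weight_enum_relabel[OF \<open>inj_on h A\<close> Q, where 'a = 'a] by simp
qed

section \<open>The total part of a partial map and the components of a forest\<close>

definition total_part :: "(nat \<rightharpoonup> nat) \<Rightarrow> nat set \<Rightarrow> nat set" where
  "total_part f A = {x \<in> A. \<forall>n. piter f n x \<noteq> None}"

context
  fixes A :: "nat set" and f :: "nat \<rightharpoonup> nat"
  assumes pfun: "pfun_on A f"
begin

lemma invariant_total_part: "invariant (total_part f A) f"
  unfolding invariant_def
proof (intro ballI allI impI)
  fix x y assume x: "x \<in> total_part f A" and fx: "f x = Some y"
  have "piter f n y \<noteq> None" for n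
  proof -
    have "piter f (Suc n) x \<noteq> None"
      using x unfolding total_part_def by blast
    then show ?thesis
      unfolding piter_Suc_Some[where f = f, OF fx] .
  qed
  then show "y \<in> total_part f A"
    using pfun_on_Some[OF pfun fx] unfolding total_part_def by blast
qed

lemma invariant_compl_total_part: "invariant (A - total_part f A) f"
  unfolding invariant_def
proof (intro ballI allI impI)
  fix x y assume x: "x \<in> A - total_part f A" and fx: "f x = Some y"
  then obtain n where n: "piter f n x = None"
    unfolding total_part_def by blast
  then obtain m where "n = Suc m"
    by (cases n) auto
  then have "piter f m y = None"
    using n piter_Suc_Some[where f = f, OF fx] by simp
  then show "y \<in> A - total_part f A"
    using pfun_on_Some[OF pfun fx] unfolding total_part_def by blast
qed

lemma is_total_total_part: "is_total (total_part f A) (f |` total_part f A)"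
  unfolding is_total_def total_part_def by (auto dest: spec[of _ 1])

lemma is_forest_compl_total_part: "is_forest (A - total_part f A) (f |` (A - total_part f A))"
  unfolding is_forest_def
  using piter_restrict[OF invariant_compl_total_part] by (auto simp: total_part_def)

end

lemma piter_is_total:
  assumes "pfun_on D g" "is_total D g" "x \<in> D"
  shows "piter g n x \<noteq> None"
proof (induction n)
  case (Suc n)
  then obtain y where "piter g n x = Some y"
    by blast
  moreover from this have "y \<in> D"
    using piter_invariant[OF pfun_on_invariant[OF assms(1)] assms(3)] by blast
  ultimately show ?case
    using assms(2) unfolding is_total_def by auto
qed simp

lemma total_part_map_add:
  assumes "D \<subseteq> A" and g: "pfun_on D g" "is_total D g" and h: "pfun_on (A - D) h" "is_forest (A - D) h"
  shows "total_part (g ++ h) A = D"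
proof
  note glued = map_add_glue[OF assms(1) g(1) h(1)]
  show "total_part (g ++ h) A \<subseteq> D"
  proof
    fix x assume x: "x \<in> total_part (g ++ h) A"
    show "x \<in> D"
    proof (rule ccontr)
      assume "x \<notin> D"
      with x have "x \<in> A - D"
        unfolding total_part_def by blast
      moreover from this obtain n where "piter h n x = None"
        using h(2) unfolding is_forest_def by blast
      ultimately have "piter (g ++ h) n x = None"
        using piter_restrict[OF glued(3)] glued(5) by metis
      then show False
        using x unfolding total_part_def by blast
    qed
  qed
  have "piter (g ++ h) n x \<noteq> None" if "x \<in> D" for x n
    using piter_restrict[OF glued(2) that] glued(4) piter_is_total[OF g that] by simp
  then show "D \<subseteq> total_part (g ++ h) A"
    using assms(1) unfolding total_part_def by blast
qed

lemma weight_enum_total_forest: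
  assumes "finite A"
  shows "(weight_enum k Ps (\<lambda>_ _. True) A :: 'a::comm_ring_1 poly) =
    (\<Sum>D\<in>Pow A. weight_enum k Ps is_total D * weight_enum k Ps is_forest (A - D))"
proof (rule weight_enum_split[OF subset_refl _ _ assms, where \<sigma> = "\<lambda>f. total_part f A"])
  fix f assume "pfun_on A f"
  then show "total_part f A \<in> Pow A \<and> invariant (total_part f A) f \<and> invariant (A - total_part f A) f \<and>
      is_total (total_part f A) (f |` total_part f A) \<and>
      is_forest (A - total_part f A) (f |` (A - total_part f A))"
    using invariant_total_part invariant_compl_total_part is_total_total_part
      is_forest_compl_total_part by (auto simp: total_part_def)
next
  fix D g h assume "D \<in> Pow A" "pfun_on D g" "pfun_on (A - D) h" "is_total D g" "is_forest (A - D) h"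
  then show "True \<and> total_part (g ++ h) A = D"
    using total_part_map_add by blast
qed

definition component :: "(nat \<rightharpoonup> nat) \<Rightarrow> nat \<Rightarrow> nat set \<Rightarrow> nat set" where
  "component f a A = {x \<in> A. \<exists>i j y. piter f i x = Some y \<and> piter f j a = Some y}"

context
  fixes A :: "nat set" and f :: "nat \<rightharpoonup> nat" and a :: nat
  assumes pfun: "pfun_on A f" and a: "a \<in> A"
begin

lemma mem_component: "a \<in> component f a A"
proof -
  have "piter f 0 a = Some a"
    by simp
  then show ?thesis
    unfolding component_def using a by blast
qed

lemma invariant_component: "invariant (component f a A) f"
  unfolding invariant_def
proof (intro ballI allI impI)
  fix x y assume x: "x \<in> component f a A" and fx: "f x = Some y"
  then obtain i j z where ij: "piter f i x = Some z" "piter f j a = Some z"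
    unfolding component_def by blast
  have "\<exists>i j z. piter f i y = Some z \<and> piter f j a = Some z"
  proof (cases i)
    case 0
    then have "piter f (Suc j) a = Some y"
      using ij fx by simp
    then show ?thesis
      using piter.simps(1)[of f y] by blast
  next
    case (Suc i')
    then have "piter f i' y = Some z"
      using ij(1) piter_Suc_Some[where f = f, OF fx] by simp
    then show ?thesis
      using ij(2) by blast
  qed
  then show "y \<in> component f a A"
    unfolding component_def using pfun_on_Some[OF pfun fx] by blast
qed

lemma invariant_compl_component: "invariant (A - component f a A) f"
  unfolding invariant_def
proof (intro ballI allI impI)
  fix x y assume x: "x \<in> A - component f a A" and fx: "f x = Some y"
  have "y \<notin> component f a A"
  proof
    assume "y \<in> component f a A"
    then obtain i j z where "piter f i y = Some z" "piter f j a = Some z"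
      unfolding component_def by blast
    then have "piter f (Suc i) x = Some z" "piter f j a = Some z"
      using piter_Suc_Some[where f = f, OF fx] by simp_all
    then have "x \<in> component f a A"
      using x unfolding component_def by blast
    then show False
      using x by blast
  qed
  then show "y \<in> A - component f a A"
    using pfun_on_Some[OF pfun fx] by blast
qed

lemma is_tree_component:
  assumes "is_forest A f"
  shows "is_tree (component f a A) (f |` component f a A)"
proof -
  let ?C = "component f a A"
  have "?C \<subseteq> A"
    unfolding component_def by blast
  then have forest: "is_forest ?C (f |` ?C)"
    using is_forest_split[OF pfun _ invariant_component invariant_compl_component] assms by blast
  obtain n where "piter f n a = None"
    using assms a unfolding is_forest_def by blast
  then obtain j r where r: "piter f j a = Some r" "f r = None"
    using piter_None_imp_root by blast
  have "r \<in> ?C"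
  proof -
    have "r \<in> A"
      using piter_invariant[OF pfun_on_invariant[OF pfun] a r(1)] .
    moreover have "piter f 0 r = Some r"
      by simp
    ultimately show ?thesis
      unfolding component_def using r(1) by blast
  qed
  moreover have "x = r" if x: "x \<in> ?C" and fx: "f x = None" for x
  proof -
    obtain i j' z where z: "piter f i x = Some z" "piter f j' a = Some z"
      using x unfolding component_def by blast
    have "i = 0"
      using z(1) piter_Suc_None[of f x] fx by (cases i) auto
    then have "piter f j' a = Some x"
      using z by simp
    then show "x = r"
      using piter_root_unique[OF _ fx r] by blast
  qed
  ultimately show ?thesis
    unfolding is_tree_def using forest r(2) by auto
qed

end

lemma is_tree_reaches_root:
  assumes "pfun_on D g" "is_tree D g" "r \<in> D" "g r = None" "x \<in> D"
  shows "\<exists>i. piter g i x = Some r"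
proof -
  obtain n where "piter g n x = None"
    using assms(2,5) unfolding is_tree_def is_forest_def by blast
  then obtain i r' where r': "piter g i x = Some r'" "g r' = None"
    using piter_None_imp_root by blast
  moreover have "r' \<in> D"
    using piter_invariant[OF pfun_on_invariant[OF assms(1)] assms(5) r'(1)] .
  ultimately show ?thesis
    using assms(2-4) unfolding is_tree_def by blast
qed

lemma component_map_add:
  assumes "D \<subseteq> A" "a \<in> D" and g: "pfun_on D g" "is_tree D g" and h: "pfun_on (A - D) h"
  shows "component (g ++ h) a A = D"
proof
  note glued = map_add_glue[OF assms(1) g(1) h]
  show "component (g ++ h) a A \<subseteq> D"
  proof
    fix x assume "x \<in> component (g ++ h) a A"
    then obtain i j z where x: "x \<in> A"
      and z: "piter (g ++ h) i x = Some z" "piter (g ++ h) j a = Some z"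
      unfolding component_def by blast
    have "z \<in> D"
      using piter_invariant[OF glued(2) assms(2) z(2)] .
    show "x \<in> D"
    proof (rule ccontr)
      assume "x \<notin> D"
      then have "z \<in> A - D"
        using piter_invariant[OF glued(3) _ z(1)] x by blast
      then show False
        using \<open>z \<in> D\<close> by blast
    qed
  qed
  obtain r where r: "r \<in> D" "g r = None"
    using g(2) unfolding is_tree_def by blast
  have "\<exists>i. piter (g ++ h) i x = Some r" if x: "x \<in> D" for x
    using is_tree_reaches_root[OF g r x] piter_restrict[OF glued(2) x] glued(4) by simp
  then show "D \<subseteq> component (g ++ h) a A"
    unfolding component_def using assms(1,2) by blast
qed

lemma weight_enum_forest_tree:
  assumes "finite A" "a \<in> A"
  shows "(weight_enum k Ps is_forest A :: 'a::comm_ring_1 poly) =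
    (\<Sum>D | D \<subseteq> A \<and> a \<in> D. weight_enum k Ps is_tree D * weight_enum k Ps is_forest (A - D))"
proof (rule weight_enum_split[OF _ _ _ assms(1), where \<sigma> = "\<lambda>f. component f a A"])
  show "{D. D \<subseteq> A \<and> a \<in> D} \<subseteq> Pow A"
    by blast
next
  fix f assume f: "pfun_on A f" "is_forest A f"
  have "component f a A \<subseteq> A"
    unfolding component_def by blast
  with f show "component f a A \<in> {D. D \<subseteq> A \<and> a \<in> D} \<and> invariant (component f a A) f \<and>
      invariant (A - component f a A) f \<and> is_tree (component f a A) (f |` component f a A) \<and>
      is_forest (A - component f a A) (f |` (A - component f a A))"
    using mem_component invariant_component invariant_compl_component is_tree_component
      is_forest_split assms(2) by blast
next
  fix D g h assume D: "D \<in> {D. D \<subseteq> A \<and> a \<in> D}" and g: "pfun_on D g" "is_tree D g"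
    and h: "pfun_on (A - D) h" "is_forest (A - D) h"
  then have "D \<subseteq> A"
    by blast
  note glued = map_add_glue[OF this g(1) h(1)]
  show "is_forest A (g ++ h) \<and> component (g ++ h) a A = D"
    using is_forest_split[OF glued(1) \<open>D \<subseteq> A\<close> glued(2,3)] glued(4,5) g(2) h(2)
      component_map_add[OF \<open>D \<subseteq> A\<close> _ g h(1)] D unfolding is_tree_def by auto
qed

lemma weight_enum_forest_empty: "weight_enum k Ps is_forest {} = 1"
proof -
  have "pmaps Ps is_forest {} = {Map.empty}"
    unfolding pmaps_def pfun_on_def fibres_in_def is_forest_def by auto
  then show ?thesis
    unfolding weight_enum_def weight_def by simp
qed

lemma weight_enum_tree_empty: "weight_enum k Ps is_tree {} = 0"
proof -
  have "pmaps Ps is_tree {} = {}"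
    unfolding pmaps_def is_tree_def by blast
  then show ?thesis
    unfolding weight_enum_def by simp
qed

section \<open>Binomial convolutions\<close>

lemma sum_Pow_card:
  fixes \<phi> :: "nat \<Rightarrow> 'b::comm_semiring_1"
  assumes "finite A"
  shows "(\<Sum>D\<in>Pow A. \<phi> (card D)) = (\<Sum>i\<le>card A. of_nat (card A choose i) * \<phi> i)"
proof -
  have "card ` Pow A \<subseteq> {..card A}"
    using card_mono[OF assms] by auto
  then have "(\<Sum>D\<in>Pow A. \<phi> (card D)) = (\<Sum>i\<le>card A. \<Sum>D | D \<in> Pow A \<and> card D = i. \<phi> (card D))"
    using assms by (intro sum.group[symmetric]) simp_all
  also have "\<dots> = (\<Sum>i\<le>card A. of_nat (card A choose i) * \<phi> i)"
  proof (rule sum.cong[OF refl])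
    fix i
    have "(\<Sum>D | D \<in> Pow A \<and> card D = i. \<phi> (card D)) = of_nat (card {D. D \<subseteq> A \<and> card D = i}) * \<phi> i"
      by simp
    then show "(\<Sum>D | D \<in> Pow A \<and> card D = i. \<phi> (card D)) = of_nat (card A choose i) * \<phi> i"
      using n_subsets[OF assms, of i] by simp
  qed
  finally show ?thesis .
qed

lemma weight_enum_binomial_total_forest:
  "(weight_enum k Ps (\<lambda>_ _. True) {1..n} :: 'a::comm_ring_1 poly) =
   (\<Sum>i\<le>n. of_nat (n choose i) * (weight_enum k Ps is_total {1..i} * weight_enum k Ps is_forest {1..n - i}))"
proof -
  have "(weight_enum k Ps (\<lambda>_ _. True) {1..n} :: 'a poly) =
      (\<Sum>D\<in>Pow {1..n}. weight_enum k Ps is_total D * weight_enum k Ps is_forest ({1..n} - D))"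
    by (rule weight_enum_total_forest) simp
  also have "\<dots> = (\<Sum>D\<in>Pow {1..n}. weight_enum k Ps is_total {1..card D} * weight_enum k Ps is_forest {1..n - card D})"
  proof (rule sum.cong[OF refl])
    fix D assume "D \<in> Pow {1..n}"
    then have "finite D" "card ({1..n} - D) = n - card D"
      by (auto simp: card_Diff_subset finite_subset)
    then show "weight_enum k Ps is_total D * weight_enum k Ps is_forest ({1..n} - D) =
        (weight_enum k Ps is_total {1..card D} * weight_enum k Ps is_forest {1..n - card D} :: 'a poly)"
      using weight_enum_card[OF \<open>finite D\<close> is_total_relabel, where 'a = 'a]
        weight_enum_card[OF _ is_forest_relabel, where 'a = 'a, of "{1..n} - D"] by simp
  qed
  also have "\<dots> = (\<Sum>i\<le>n. of_nat (n choose i) * (weight_enum k Ps is_total {1..i} * weight_enum k Ps is_forest {1..n - i}))"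
    using sum_Pow_card[of "{1..n}" "\<lambda>i. weight_enum k Ps is_total {1..i} * weight_enum k Ps is_forest {1..n - i}"]
    by simp
  finally show ?thesis .
qed

lemma weight_enum_binomial_forest_Suc:
  "(weight_enum k Ps is_forest {1..Suc n} :: 'a::comm_ring_1 poly) =
   (\<Sum>i\<le>n. of_nat (n choose i) * (weight_enum k Ps is_tree {1..Suc i} * weight_enum k Ps is_forest {1..n - i}))"
proof -
  let ?a = "Suc n"
  have parts: "{D. D \<subseteq> {1..Suc n} \<and> ?a \<in> D} = insert ?a ` Pow {1..n}"
  proof (intro equalityI subsetI)
    fix D assume "D \<in> {D. D \<subseteq> {1..Suc n} \<and> ?a \<in> D}"
    then have "D - {?a} \<in> Pow {1..n}" "D = insert ?a (D - {?a})"
      by auto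
    then show "D \<in> insert ?a ` Pow {1..n}"
      by blast
  qed auto
  have "inj_on (insert ?a) (Pow {1..n})"
    by (rule inj_onI) (metis Diff_insert_absorb PowD atLeastAtMost_iff lessI not_less subsetD)
  then have "(weight_enum k Ps is_forest {1..Suc n} :: 'a poly) =
      (\<Sum>B\<in>Pow {1..n}. weight_enum k Ps is_tree (insert ?a B) * weight_enum k Ps is_forest ({1..Suc n} - insert ?a B))"
    using weight_enum_forest_tree[of "{1..Suc n}" ?a] unfolding parts by (simp add: sum.reindex)
  also have "\<dots> = (\<Sum>B\<in>Pow {1..n}. weight_enum k Ps is_tree {1..Suc (card B)} * weight_enum k Ps is_forest {1..n - card B})"
  proof (rule sum.cong[OF refl])
    fix B assume "B \<in> Pow {1..n}"
    then have "finite B" "?a \<notin> B" "{1..Suc n} - insert ?a B = {1..n} - B" "card ({1..n} - B) = n - card B"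
      by (auto simp: card_Diff_subset finite_subset)
    then show "weight_enum k Ps is_tree (insert ?a B) * weight_enum k Ps is_forest ({1..Suc n} - insert ?a B) =
        (weight_enum k Ps is_tree {1..Suc (card B)} * weight_enum k Ps is_forest {1..n - card B} :: 'a poly)"
      using weight_enum_card[OF _ is_tree_relabel, where 'a = 'a, of "insert ?a B"]
        weight_enum_card[OF _ is_forest_relabel, where 'a = 'a, of "{1..n} - B"] by simp
  qed
  also have "\<dots> = (\<Sum>i\<le>n. of_nat (n choose i) * (weight_enum k Ps is_tree {1..Suc i} * weight_enum k Ps is_forest {1..n - i}))"
    using sum_Pow_card[of "{1..n}" "\<lambda>i. weight_enum k Ps is_tree {1..Suc i} * weight_enum k Ps is_forest {1..n - i}"]
    by simp
  finally show ?thesis .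
qed

section \<open>Exponential generating functions\<close>

definition egf :: "(nat \<Rightarrow> 'a::comm_ring_1 poly) \<Rightarrow> 'a poly fps" where
  "egf a = Abs_fps (\<lambda>n. smult (natinv (fact n)) (a n))"

lemma egf_nth [simp]: "egf a $ n = smult (natinv (fact n)) (a n)"
  by (simp add: egf_def)

lemma natinv_eqI:
  assumes "of_nat n * x = (1::'a::comm_ring_1)"
  shows "natinv n = x"
  unfolding natinv_def
proof (rule the_equality)
  show "of_nat n * x = 1"
    by (rule assms)
  fix y :: 'a assume y: "of_nat n * y = 1"
  have "y = y * (of_nat n * x)"
    using assms by simp
  also have "\<dots> = x"
    using y by (simp add: ac_simps)
  finally show "y = x" .
qed

text \<open>The simp normal form of \<open>natinv (fact 0)\<close>.\<close>
lemma natinv_Suc_0 [simp]: "natinv (Suc 0) = 1"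
  by (rule natinv_eqI) simp

lemma of_nat_mult_poly: "(of_nat m :: 'a::comm_ring_1 poly) * p = smult (of_nat m) p"
  by (simp add: of_nat_poly)

lemma smult_sum_right: "smult c (\<Sum>i\<in>S. f i) = (\<Sum>i\<in>S. smult c (f i))"
  by (induction S rule: infinite_finite_induct) (simp_all add: smult_add_right)

lemma fps_ode_unique:
  fixes X Y D :: "'b::comm_ring_1 fps"
  assumes X: "fps_deriv X = D * X" and Y: "fps_deriv Y = D * Y" and "X $ 0 = Y $ 0"
    and no_torsion: "\<And>n c. of_nat (Suc n) * c = (0::'b) \<Longrightarrow> c = 0"
  shows "X = Y"
proof -
  have "\<forall>m\<le>n. X $ m = Y $ m" for n
  proof (induction n)
    case (Suc n)
    have "of_nat (Suc n) * X $ Suc n = (D * X) $ n"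
      using arg_cong[OF X, of "\<lambda>F. F $ n"] by simp
    also have "\<dots> = (D * Y) $ n"
      using Suc.IH by (simp add: fps_mult_nth)
    also have "\<dots> = of_nat (Suc n) * Y $ Suc n"
      using arg_cong[OF Y, of "\<lambda>F. F $ n"] by simp
    finally have "of_nat (Suc n) * (X $ Suc n - Y $ Suc n) = 0"
      by (simp add: algebra_simps)
    then have "X $ Suc n = Y $ Suc n"
      using no_torsion[of n "X $ Suc n - Y $ Suc n"] by simp
    then show ?case
      using Suc.IH by (simp add: le_Suc_eq)
  qed (use assms(3) in simp)
  then show ?thesis
    by (intro fps_ext) blast
qed

lemma fps_exp_of_nth_partial:
  fixes T :: "'a::comm_ring_1 poly fps"
  assumes "T $ 0 = 0" "m \<le> N"
  shows "fps_exp_of T $ m = (\<Sum>j\<le>N. fps_const [:natinv (fact j):] * T ^ j) $ m"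
proof -
  have "(T ^ j) $ m = 0" if "m < j" for j
    using startsby_zero_power_prefix[OF assms(1)] that by blast
  then have "(\<Sum>j\<le>N. smult (natinv (fact j)) ((T ^ j) $ m)) = (\<Sum>j\<le>m. smult (natinv (fact j)) ((T ^ j) $ m))"
    using assms(2) by (intro sum.mono_neutral_right) auto
  then show ?thesis
    unfolding fps_exp_of_def by (simp add: fps_sum_nth)
qed

context
  assumes Q: "\<forall>n::nat. n > 0 \<longrightarrow> (\<exists>x::'a::comm_ring_1. of_nat n * x = 1)"
begin

lemma of_nat_mult_natinv: "n > 0 \<Longrightarrow> of_nat n * (natinv n :: 'a) = 1"
  using Q natinv_eqI by metis

lemma natinv_mult:
  assumes "a > 0" "b > 0"
  shows "(natinv (a * b) :: 'a) = natinv a * natinv b"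
proof (rule natinv_eqI)
  have "of_nat (a * b) * (natinv a * natinv b :: 'a) = (of_nat a * natinv a) * (of_nat b * natinv b)"
    by (simp add: ac_simps)
  then show "of_nat (a * b) * (natinv a * natinv b :: 'a) = 1"
    using of_nat_mult_natinv[OF assms(1)] of_nat_mult_natinv[OF assms(2)] by simp
qed

lemma natinv_fact_binomial:
  assumes "i \<le> n"
  shows "(natinv (fact n) :: 'a) * of_nat (n choose i) = natinv (fact i) * natinv (fact (n - i))"
proof -
  have "(fact n :: nat) = fact i * fact (n - i) * (n choose i)"
    using binomial_fact_lemma[OF assms] by (simp add: ac_simps)
  then have "(natinv (fact n) :: 'a) = natinv (fact i) * natinv (fact (n - i)) * natinv (n choose i)"
    using assms by (simp add: natinv_mult)
  then have "(natinv (fact n) :: 'a) * of_nat (n choose i) =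
      natinv (fact i) * natinv (fact (n - i)) * (of_nat (n choose i) * natinv (n choose i))"
    by (simp add: ac_simps)
  then show ?thesis
    using of_nat_mult_natinv[of "n choose i"] assms by simp
qed

lemma of_nat_Suc_mult_natinv_fact: "of_nat (Suc n) * (natinv (fact (Suc n)) :: 'a) = natinv (fact n)"
  using natinv_mult[of "Suc n" "fact n"] of_nat_mult_natinv[of "Suc n"]
  by (simp add: ac_simps del: of_nat_Suc)

lemma poly_of_nat_Suc_mult_eq_0:
  assumes "of_nat (Suc n) * (c :: 'a poly) = 0"
  shows "c = 0"
proof -
  have "smult (natinv (Suc n) * of_nat (Suc n)) c = smult (natinv (Suc n)) (of_nat (Suc n) * c)"
    by (simp add: of_nat_mult_poly del: of_nat_Suc)
  also have "\<dots> = 0"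
    using assms by simp
  finally show "c = 0"
    using of_nat_mult_natinv[of "Suc n"] by (simp add: mult.commute)
qed

lemma egf_binomial_mult:
  assumes "\<And>n. c n = (\<Sum>i\<le>n. of_nat (n choose i) * (a i * b (n - i)))"
  shows "egf c = egf a * (egf b :: 'a poly fps)"
proof (rule fps_ext)
  fix n
  have "egf c $ n = (\<Sum>i\<le>n. smult (natinv (fact n) * of_nat (n choose i)) (a i * b (n - i)))"
    by (simp add: assms of_nat_mult_poly smult_sum_right)
  also have "\<dots> = (\<Sum>i\<le>n. smult (natinv (fact i) * natinv (fact (n - i))) (a i * b (n - i)))"
    by (intro sum.cong refl) (simp add: natinv_fact_binomial)
  also have "\<dots> = (egf a * egf b) $ n"
    by (simp add: fps_mult_nth atLeast0AtMost ac_simps)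
  finally show "egf c $ n = (egf a * egf b) $ n" .
qed

lemma fps_deriv_egf: "fps_deriv (egf a) = egf (\<lambda>n. a (Suc n) :: 'a poly)"
proof (rule fps_ext)
  fix n
  have "fps_deriv (egf a) $ n = smult (of_nat (Suc n) * natinv (fact (Suc n))) (a (Suc n))"
    by (simp add: of_nat_mult_poly ac_simps del: of_nat_Suc fact_Suc)
  then show "fps_deriv (egf a) $ n = egf (\<lambda>n. a (Suc n)) $ n"
    by (simp only: of_nat_Suc_mult_natinv_fact egf_nth)
qed

lemma fps_deriv_partial_exp:
  fixes T :: "'a poly fps"
  defines "S \<equiv> \<lambda>N. \<Sum>j\<le>N. fps_const [:natinv (fact j):] * T ^ j"
  shows "fps_deriv (S (Suc N)) = fps_deriv T * S N"
proof -
  define c :: "nat \<Rightarrow> 'a poly fps" where "c j = fps_const [:natinv (fact j):]" for j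
  have c_Suc: "c (Suc j) * fps_const (of_nat (Suc j)) = c j" for j
  proof -
    have "[:natinv (fact (Suc j)) :: 'a:] * of_nat (Suc j) = [:of_nat (Suc j) * natinv (fact (Suc j)):]"
      by (simp add: of_nat_poly ac_simps)
    then show ?thesis
      unfolding c_def fps_const_mult of_nat_Suc_mult_natinv_fact by simp
  qed
  have "fps_deriv (S (Suc N)) = (\<Sum>j\<le>Suc N. c j * (fps_const (of_nat j) * fps_deriv T * T ^ (j - 1)))"
    unfolding S_def c_def by (simp only: fps_deriv_sum fps_deriv_mult_const_left fps_deriv_power)
  also have "\<dots> = (\<Sum>j\<le>N. (c (Suc j) * fps_const (of_nat (Suc j))) * (fps_deriv T * T ^ j))"
    by (subst sum.atMost_Suc_shift) (simp add: ac_simps)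
  also have "\<dots> = fps_deriv T * S N"
    unfolding c_Suc unfolding S_def c_def by (simp add: sum_distrib_left ac_simps)
  finally show ?thesis .
qed

lemma fps_deriv_fps_exp_of:
  fixes T :: "'a poly fps"
  assumes "T $ 0 = 0"
  shows "fps_deriv (fps_exp_of T) = fps_deriv T * fps_exp_of T"
proof (rule fps_ext)
  fix m
  define S where "S N = (\<Sum>j\<le>N. fps_const [:natinv (fact j):] * T ^ j)" for N
  have "fps_deriv (fps_exp_of T) $ m = of_nat (Suc m) * fps_exp_of T $ Suc m"
    by (simp only: fps_deriv_nth Suc_eq_plus1)
  also have "\<dots> = of_nat (Suc m) * S (Suc m) $ Suc m"
    unfolding S_def fps_exp_of_nth_partial[OF assms order_refl] ..
  also have "\<dots> = fps_deriv (S (Suc m)) $ m"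
    by (simp only: fps_deriv_nth Suc_eq_plus1)
  also have "\<dots> = (fps_deriv T * S m) $ m"
    unfolding S_def by (simp only: fps_deriv_partial_exp)
  also have "\<dots> = (fps_deriv T * fps_exp_of T) $ m"
    unfolding fps_mult_nth S_def using fps_exp_of_nth_partial[OF assms, of _ m] by simp
  finally show "fps_deriv (fps_exp_of T) $ m = (fps_deriv T * fps_exp_of T) $ m" .
qed

end

section \<open>Functions and rooted trees as partial maps\<close>

lemma Pgf_eq_egf: "Pgf k Ps = egf (\<lambda>n. weight_enum k Ps (\<lambda>_ _. True) {1..n})"
proof -
  have "pfuns_P Ps n = pmaps Ps (\<lambda>_ _. True) {1..n}" for n
    unfolding pfuns_P_def pmaps_def pfun_on_iff fibres_in_def by simp
  moreover have "n - card (pimage f k n) = weight k {1..n} f" if "pfun_on {1..n} f" for f n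
    using weight_eq[OF _ that] by (simp add: pimage_def iter_image_def)
  ultimately show ?thesis
    unfolding Pgf_def egf_def weight_enum_def by (simp add: pmaps_def)
qed

lemma funpow_in_funcset: "f \<in> A \<rightarrow> A \<Longrightarrow> x \<in> A \<Longrightarrow> (f ^^ n) x \<in> A"
  by (induction n) auto

lemma piter_Some_restrict:
  assumes "f \<in> A \<rightarrow> A" "x \<in> A"
  shows "piter ((Some \<circ> f) |` A) n x = Some ((f ^^ n) x)"
  by (induction n) (use funpow_in_funcset[OF assms] in auto)

lemma restrict_Some_comp_in_pmaps:
  assumes f: "f \<in> funs_P Ps n"
  shows "(Some \<circ> f) |` {1..n} \<in> pmaps Ps is_total {1..n}"
proof -
  have "{y \<in> {1..n}. ((Some \<circ> f) |` {1..n}) y = Some x} = {y \<in> {1..n}. f y = x}" for x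
    by auto
  moreover have "pfun_on {1..n} ((Some \<circ> f) |` {1..n})"
  proof -
    have "f x \<in> {1..n}" if "x \<in> {1..n}" for x
      using f that unfolding funs_P_def by (blast dest: PiE_mem)
    then show ?thesis
      unfolding pfun_on_iff restrict_map_def by (auto split: if_splits)
  qed
  moreover have "{1..n} \<subseteq> dom ((Some \<circ> f) |` {1..n})"
    unfolding dom_restrict by (simp add: dom_def)
  ultimately show ?thesis
    using f unfolding funs_P_def pmaps_def fibres_in_def is_total_def by simp
qed

lemma restrict_the_comp_in_funs_P:
  assumes "g \<in> pmaps Ps is_total {1..n}"
  shows "restrict (the \<circ> g) {1..n} \<in> funs_P Ps n"
proof -
  from assms have g: "pfun_on {1..n} g" "fibres_in Ps {1..n} g" "{1..n} \<subseteq> dom g"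
    unfolding pmaps_def is_total_def by auto
  have "restrict (the \<circ> g) {1..n} y = x \<longleftrightarrow> g y = Some x" if "y \<in> {1..n}" for x y
    using domD[OF subsetD[OF g(3) that]] that by auto
  then have "{y \<in> {1..n}. restrict (the \<circ> g) {1..n} y = x} = {y \<in> {1..n}. g y = Some x}" for x
    by blast
  moreover have "restrict (the \<circ> g) {1..n} \<in> {1..n} \<rightarrow>\<^sub>E {1..n}"
  proof -
    have "the (g x) \<in> {1..n}" if "x \<in> {1..n}" for x
      using domD[OF subsetD[OF g(3) that]] pfun_on_Some[OF g(1)] by force
    then show ?thesis
      by simp
  qed
  ultimately show ?thesis
    using g(2) unfolding funs_P_def fibres_in_def by simp
qed

lemma bij_betw_funs_P:
  "bij_betw (\<lambda>f. (Some \<circ> f) |` {1..n}) (funs_P Ps n) (pmaps Ps is_total {1..n})"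
proof (rule bij_betw_byWitness[where f' = "\<lambda>g. restrict (the \<circ> g) {1..n}"])
  show "\<forall>f\<in>funs_P Ps n. restrict (the \<circ> (Some \<circ> f) |` {1..n}) {1..n} = f"
  proof (intro ballI ext)
    fix f x assume "f \<in> funs_P Ps n"
    then have f: "f \<in> {1..n} \<rightarrow>\<^sub>E {1..n}"
      unfolding funs_P_def by blast
    show "restrict (the \<circ> (Some \<circ> f) |` {1..n}) {1..n} x = f x"
    proof (cases "x \<in> {1..n}")
      case False
      then show ?thesis
        using PiE_arb[OF f False] by simp
    qed simp
  qed
  show "\<forall>g\<in>pmaps Ps is_total {1..n}. (Some \<circ> restrict (the \<circ> g) {1..n}) |` {1..n} = g"
  proof (intro ballI ext)
    fix g x assume "g \<in> pmaps Ps is_total {1..n}"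
    then have g: "pfun_on {1..n} g" "{1..n} \<subseteq> dom g"
      unfolding pmaps_def is_total_def by auto
    show "((Some \<circ> restrict (the \<circ> g) {1..n}) |` {1..n}) x = g x"
      using g(2) pfun_on_None[OF g(1)] by (cases "x \<in> {1..n}") (auto simp: domIff)
  qed
  show "(\<lambda>f. (Some \<circ> f) |` {1..n}) ` funs_P Ps n \<subseteq> pmaps Ps is_total {1..n}"
    using restrict_Some_comp_in_pmaps by blast
  show "(\<lambda>g. restrict (the \<circ> g) {1..n}) ` pmaps Ps is_total {1..n} \<subseteq> funs_P Ps n"
    using restrict_the_comp_in_funs_P by blast
qed

lemma Fgf_eq_egf: "Fgf k Ps = egf (\<lambda>n. weight_enum k Ps is_total {1..n})"
proof -
  have "n - card ((f ^^ k) ` {1..n}) = weight k {1..n} ((Some \<circ> f) |` {1..n})"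
    if "f \<in> funs_P Ps n" for f n
  proof -
    have "f \<in> {1..n} \<rightarrow> {1..n}"
      using that unfolding funs_P_def by auto
    then have "iter_image ((Some \<circ> f) |` {1..n}) k {1..n} = (f ^^ k) ` {1..n}"
      unfolding iter_image_def using piter_Some_restrict by auto
    moreover have "pfun_on {1..n} ((Some \<circ> f) |` {1..n})"
      using bij_betw_funs_P that unfolding bij_betw_def pmaps_def by blast
    ultimately show ?thesis
      using weight_eq by simp
  qed
  then have "(\<Sum>f\<in>funs_P Ps n. monom 1 (n - card ((f ^^ k) ` {1..n}))) =
      (weight_enum k Ps is_total {1..n} :: 'a::comm_ring_1 poly)" for n
    unfolding weight_enum_def using sum.reindex_bij_betw[OF bij_betw_funs_P] by simp
  then show ?thesis
    unfolding Fgf_def egf_def by simp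
qed

lemma Max_less_iff_not_mem:
  fixes N :: "nat set"
  assumes "finite N" "0 \<in> N" and down_closed: "\<And>n i. n \<in> N \<Longrightarrow> i \<le> n \<Longrightarrow> i \<in> N"
  shows "Max N < k \<longleftrightarrow> k \<notin> N"
proof
  show "Max N < k \<Longrightarrow> k \<notin> N"
    using Max_ge[OF assms(1)] by fastforce
  assume "k \<notin> N"
  moreover have "Max N \<in> N"
    using Max_in[OF assms(1)] assms(2) by blast
  ultimately show "Max N < k"
    using down_closed by (meson not_less)
qed

lemma is_forest_uniform_bound:
  assumes "finite A" "is_forest A f"
  obtains M where "\<And>x. x \<in> A \<Longrightarrow> piter f M x = None"
proof -
  obtain n where n: "\<forall>x\<in>A. piter f (n x) x = None"
    using bchoice[OF assms(2)[unfolded is_forest_def]] by blast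
  have "piter f (\<Sum>x\<in>A. n x) x = None" if "x \<in> A" for x
  proof -
    have "n x \<le> (\<Sum>x\<in>A. n x)"
      using member_le_sum[of x A n] assms(1) that by simp
    then show ?thesis
      using piter_None_mono n that by blast
  qed
  then show ?thesis
    by (rule that)
qed

lemma Max_piter_less_iff:
  assumes "finite A" "pfun_on A g" "is_forest A g" "v \<in> A"
  shows "Max {n. \<exists>w\<in>A. piter g n w = Some v} < k \<longleftrightarrow> v \<notin> iter_image g k A"
proof -
  define N where "N = {n. \<exists>w\<in>A. piter g n w = Some v}"
  obtain M where M: "\<And>x. x \<in> A \<Longrightarrow> piter g M x = None"
    using is_forest_uniform_bound[OF assms(1,3)] by blast
  have "N \<subseteq> {..<M}"
  proof
    fix n assume "n \<in> N"
    then obtain w where "w \<in> A" "piter g n w = Some v"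
      unfolding N_def by blast
    then show "n \<in> {..<M}"
      using piter_None_mono[OF M[OF \<open>w \<in> A\<close>], of n] by (cases "M \<le> n") auto
  qed
  then have "finite N"
    by (rule finite_subset) simp
  moreover have "0 \<in> N"
    unfolding N_def using assms(4) by force
  moreover have "i \<in> N" if n: "n \<in> N" and i: "i \<le> n" for n i
  proof -
    obtain w where w: "w \<in> A" "piter g n w = Some v"
      using n unfolding N_def by blast
    have "piter g (i + (n - i)) w = Some v"
      using w(2) i by simp
    then obtain u where u: "piter g (n - i) w = Some u" "piter g i u = Some v"
      unfolding piter_add by (cases "piter g (n - i) w") auto
    moreover have "u \<in> A"
      using piter_invariant[OF pfun_on_invariant[OF assms(2)] w(1) u(1)] .
    ultimately show "i \<in> N"
      unfolding N_def by blast
  qed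
  ultimately have "Max N < k \<longleftrightarrow> k \<notin> N"
    by (rule Max_less_iff_not_mem)
  then show ?thesis
    unfolding N_def iter_image_def by simp
qed

lemma piter_funpow:
  assumes "\<And>u y. g u = Some y \<Longrightarrow> p u = y"
  shows "piter g n w = Some v \<Longrightarrow> (p ^^ n) w = v"
proof (induction n arbitrary: v)
  case (Suc n)
  then obtain u where "piter g n w = Some u" "g u = Some v"
    by (auto split: option.splits)
  with Suc.IH show ?case
    using assms by simp
qed simp

lemma children_eq_fibre:
  assumes "\<And>w. w \<in> {1..m} \<Longrightarrow> p w = (case g w of None \<Rightarrow> 0 | Some y \<Rightarrow> y)" and "v \<in> {1..m}"
  shows "children m p v = {w \<in> {1..m}. g w = Some v}"
  unfolding children_def using assms by (auto split: option.splits)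

definition pmap_of_tree :: "nat \<Rightarrow> nat \<times> (nat \<Rightarrow> nat) \<Rightarrow> (nat \<rightharpoonup> nat)" where
  "pmap_of_tree m t = (Some \<circ> snd t) |` ({1..m} - {fst t})"

definition tree_of_pmap :: "nat \<Rightarrow> (nat \<rightharpoonup> nat) \<Rightarrow> nat \<times> (nat \<Rightarrow> nat)" where
  "tree_of_pmap m g = (THE r. r \<in> {1..m} \<and> g r = None, \<lambda>v. case g v of None \<Rightarrow> 0 | Some w \<Rightarrow> w)"

context
  fixes m r and p :: "nat \<Rightarrow> nat"
  assumes tree: "(r, p) \<in> rooted_trees m"
begin

lemma rooted_treesD:
  shows rooted_trees_root: "r \<in> {1..m}"
    and rooted_trees_parent_in: "\<And>v. v \<in> {1..m} - {r} \<Longrightarrow> p v \<in> {1..m}"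
    and rooted_trees_parent_out: "\<And>v. v \<notin> {1..m} - {r} \<Longrightarrow> p v = 0"
    and rooted_trees_reaches_root: "\<And>v. v \<in> {1..m} \<Longrightarrow> \<exists>n. (p ^^ n) v = r"
  using tree unfolding rooted_trees_def by auto

lemma pmap_of_tree_apply: "pmap_of_tree m (r, p) v = (if v \<in> {1..m} - {r} then Some (p v) else None)"
  unfolding pmap_of_tree_def by simp

lemma pmap_of_tree_Some: "pmap_of_tree m (r, p) u = Some y \<Longrightarrow> p u = y"
  unfolding pmap_of_tree_apply by (simp split: if_splits)

lemma pfun_on_pmap_of_tree: "pfun_on {1..m} (pmap_of_tree m (r, p))"
  unfolding pfun_on_iff pmap_of_tree_apply using rooted_trees_parent_in by auto

lemma piter_pmap_of_tree:
  "w \<in> {1..m} \<Longrightarrow> (p ^^ n) w = v \<Longrightarrow> v \<noteq> 0 \<Longrightarrow> piter (pmap_of_tree m (r, p)) n w = Some v"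
proof (induction n arbitrary: v)
  case (Suc n)
  define u where "u = (p ^^ n) w"
  have pu: "p u = v"
    using Suc.prems(2) unfolding u_def by simp
  have u: "u \<in> {1..m} - {r}"
  proof (rule ccontr)
    assume "u \<notin> {1..m} - {r}"
    then have "p u = 0"
      by (rule rooted_trees_parent_out)
    then show False
      using pu Suc.prems(3) by simp
  qed
  then have "piter (pmap_of_tree m (r, p)) n w = Some u"
    using Suc.IH[OF Suc.prems(1) u_def[symmetric]] by simp
  moreover have "pmap_of_tree m (r, p) u = Some v"
    unfolding pmap_of_tree_apply using u pu by simp
  ultimately show ?case
    by simp
qed simp

lemma is_tree_pmap_of_tree: "is_tree {1..m} (pmap_of_tree m (r, p))"
  unfolding is_tree_def is_forest_def
proof (intro conjI ballI bexI[of _ r])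
  fix v assume "v \<in> {1..m}"
  then obtain n where "(p ^^ n) v = r"
    using rooted_trees_reaches_root by blast
  then have "piter (pmap_of_tree m (r, p)) n v = Some r"
    using piter_pmap_of_tree \<open>v \<in> {1..m}\<close> rooted_trees_root by simp
  then have "piter (pmap_of_tree m (r, p)) (Suc n) v = None"
    by (simp add: pmap_of_tree_apply)
  then show "\<exists>n. piter (pmap_of_tree m (r, p)) n v = None"
    by blast
qed (use rooted_trees_root in \<open>auto simp: pmap_of_tree_apply\<close>)

lemma children_pmap_of_tree:
  "v \<in> {1..m} \<Longrightarrow> children m p v = {w \<in> {1..m}. pmap_of_tree m (r, p) w = Some v}"
  by (rule children_eq_fibre) (simp_all add: pmap_of_tree_apply rooted_trees_parent_out)

lemma tree_height_less_iff:
  assumes v: "v \<in> {1..m}"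
  shows "tree_height m p v < k \<longleftrightarrow> v \<notin> iter_image (pmap_of_tree m (r, p)) k {1..m}"
proof -
  let ?g = "pmap_of_tree m (r, p)"
  have "(p ^^ n) w = v \<longleftrightarrow> piter ?g n w = Some v" if "w \<in> {1..m}" for n w
  proof
    assume "(p ^^ n) w = v"
    then show "piter ?g n w = Some v"
      using piter_pmap_of_tree[OF that] v by simp
  qed (rule piter_funpow[OF pmap_of_tree_Some])
  then have "{n. \<exists>w\<in>{1..m}. (p ^^ n) w = v} = {n. \<exists>w\<in>{1..m}. piter ?g n w = Some v}"
    by blast
  then show ?thesis
    unfolding tree_height_def
    using Max_piter_less_iff[OF finite_atLeastAtMost pfun_on_pmap_of_tree _ v] is_tree_pmap_of_tree
    unfolding is_tree_def by simp
qed

lemma chi_eq_weight: "chi k m p = weight k {1..m} (pmap_of_tree m (r, p))"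
proof -
  have "{v \<in> {1..m}. tree_height m p v < k} = {1..m} - iter_image (pmap_of_tree m (r, p)) k {1..m}"
    using tree_height_less_iff by blast
  then show ?thesis
    unfolding chi_def weight_def by simp
qed

end

context
  fixes m and g :: "nat \<rightharpoonup> nat"
  assumes pfun: "pfun_on {1..m} g" and tree: "is_tree {1..m} g"
begin

lemma fst_tree_of_pmap:
  assumes "r \<in> {1..m}" "g r = None"
  shows "fst (tree_of_pmap m g) = r"
  unfolding tree_of_pmap_def fst_conv
proof (rule the_equality)
  show "r \<in> {1..m} \<and> g r = None"
    using assms by blast
  fix r' assume "r' \<in> {1..m} \<and> g r' = None"
  then show "r' = r"
    using tree assms unfolding is_tree_def by blast
qed

lemma tree_of_pmap_eq:
  assumes "r \<in> {1..m}" "g r = None"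
  shows "tree_of_pmap m g = (r, \<lambda>v. case g v of None \<Rightarrow> 0 | Some w \<Rightarrow> w)"
  using fst_tree_of_pmap[OF assms] unfolding tree_of_pmap_def by (simp add: prod_eq_iff)

lemma tree_of_pmap_in_rooted_trees: "tree_of_pmap m g \<in> rooted_trees m"
proof -
  obtain r where r: "r \<in> {1..m}" "g r = None" "\<forall>x\<in>{1..m}. g x = None \<longrightarrow> x = r"
    using tree unfolding is_tree_def by blast
  define p where "p v = (case g v of None \<Rightarrow> 0 | Some w \<Rightarrow> w)" for v
  have p_Some: "p u = y" if "g u = Some y" for u y
    using that unfolding p_def by simp
  have "p v \<in> {1..m}" if v: "v \<in> {1..m} - {r}" for v
  proof -
    obtain y where "g v = Some y"
      using v r(3) by fastforce
    then show ?thesis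
      using p_Some pfun_on_Some[OF pfun] by blast
  qed
  moreover have "p v = 0" if "v \<notin> {1..m} - {r}" for v
    using that r(2) pfun_on_None[OF pfun] unfolding p_def by auto
  moreover have "\<exists>n. (p ^^ n) v = r" if v: "v \<in> {1..m}" for v
    using is_tree_reaches_root[OF pfun tree r(1,2) v] piter_funpow[of g p, OF p_Some] by blast
  ultimately show ?thesis
    unfolding tree_of_pmap_eq[OF r(1,2)] p_def[symmetric] rooted_trees_def using r(1) by blast
qed

lemma pmap_of_tree_of_pmap: "pmap_of_tree m (tree_of_pmap m g) = g"
proof
  fix v
  obtain r where r: "r \<in> {1..m}" "g r = None" "\<forall>x\<in>{1..m}. g x = None \<longrightarrow> x = r"
    using tree unfolding is_tree_def by blast
  show "pmap_of_tree m (tree_of_pmap m g) v = g v"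
  proof (cases "v \<in> {1..m} - {r}")
    case True
    then obtain y where "g v = Some y"
      using r(3) by fastforce
    then show ?thesis
      unfolding tree_of_pmap_eq[OF r(1,2)] pmap_of_tree_def using True by simp
  next
    case False
    then have "g v = None"
      using r(2) pfun_on_None[OF pfun] by blast
    then show ?thesis
      unfolding tree_of_pmap_eq[OF r(1,2)] pmap_of_tree_def using False by simp
  qed
qed

end

lemma tree_of_pmap_of_tree:
  assumes "(r, p) \<in> rooted_trees m"
  shows "tree_of_pmap m (pmap_of_tree m (r, p)) = (r, p)"
proof -
  have "fst (tree_of_pmap m (pmap_of_tree m (r, p))) = r"
    using fst_tree_of_pmap[OF pfun_on_pmap_of_tree[OF assms] is_tree_pmap_of_tree[OF assms]
        rooted_treesD(1)[OF assms]]
    by (simp add: pmap_of_tree_apply[OF assms])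
  moreover have "(case pmap_of_tree m (r, p) v of None \<Rightarrow> 0 | Some w \<Rightarrow> w) = p v" for v
    using rooted_treesD(3)[OF assms, of v] by (simp add: pmap_of_tree_apply[OF assms])
  ultimately show ?thesis
    unfolding tree_of_pmap_def by (simp add: prod_eq_iff fun_eq_iff)
qed

lemma bij_betw_trees_P: "bij_betw (pmap_of_tree m) (trees_P Ps m) (pmaps Ps is_tree {1..m})"
proof (rule bij_betw_byWitness[where f' = "tree_of_pmap m"])
  show "\<forall>t\<in>trees_P Ps m. tree_of_pmap m (pmap_of_tree m t) = t"
    unfolding trees_P_def using tree_of_pmap_of_tree by blast
  show "\<forall>g\<in>pmaps Ps is_tree {1..m}. pmap_of_tree m (tree_of_pmap m g) = g"
    unfolding pmaps_def using pmap_of_tree_of_pmap by blast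
  show "pmap_of_tree m ` trees_P Ps m \<subseteq> pmaps Ps is_tree {1..m}"
  proof (rule image_subsetI)
    fix t assume "t \<in> trees_P Ps m"
    then obtain r p where t: "t = (r, p)" "(r, p) \<in> rooted_trees m"
      and children: "\<forall>v\<in>{1..m}. card (children m p v) \<in> Ps"
      unfolding trees_P_def by blast
    then show "pmap_of_tree m t \<in> pmaps Ps is_tree {1..m}"
      unfolding pmaps_def fibres_in_def
      using pfun_on_pmap_of_tree is_tree_pmap_of_tree children_pmap_of_tree by simp
  qed
  show "tree_of_pmap m ` pmaps Ps is_tree {1..m} \<subseteq> trees_P Ps m"
  proof (rule image_subsetI)
    fix g assume "g \<in> pmaps Ps is_tree {1..m}"
    then have g: "pfun_on {1..m} g" "fibres_in Ps {1..m} g" "is_tree {1..m} g"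
      unfolding pmaps_def by auto
    obtain r p where t: "tree_of_pmap m g = (r, p)"
      by (metis surj_pair)
    have rooted: "(r, p) \<in> rooted_trees m"
      using tree_of_pmap_in_rooted_trees[OF g(1,3)] t by simp
    have "pmap_of_tree m (r, p) = g"
      using pmap_of_tree_of_pmap[OF g(1,3)] t by simp
    then have "children m p v = {w \<in> {1..m}. g w = Some v}" if "v \<in> {1..m}" for v
      using children_pmap_of_tree[OF rooted that] by simp
    then show "tree_of_pmap m g \<in> trees_P Ps m"
      unfolding trees_P_def t using g(2) rooted unfolding fibres_in_def by simp
  qed
qed

lemma Tgf_eq_egf: "(Tgf k Ps :: 'a::comm_ring_1 poly fps) = egf (\<lambda>n. weight_enum k Ps is_tree {1..n})"
proof -
  have "(\<Sum>t\<in>trees_P Ps m. monom 1 (chi k m (snd t))) = (weight_enum k Ps is_tree {1..m} :: 'a poly)" for m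
  proof -
    have "chi k m (snd t) = weight k {1..m} (pmap_of_tree m t)" if "t \<in> trees_P Ps m" for t
      using that chi_eq_weight unfolding trees_P_def by auto
    then show ?thesis
      unfolding weight_enum_def using sum.reindex_bij_betw[OF bij_betw_trees_P] by simp
  qed
  then show ?thesis
    unfolding Tgf_def egf_def by simp
qed

section \<open>Forests and the exponential formula\<close>

context
  assumes Q: "\<forall>n::nat. n > 0 \<longrightarrow> (\<exists>x::'a::comm_ring_1. of_nat n * x = 1)"
begin

lemma Pgf_eq_Fgf_mult_egf_forests:
  "(Pgf k Ps :: 'a poly fps) = Fgf k Ps * egf (\<lambda>n. weight_enum k Ps is_forest {1..n})"
  unfolding Pgf_eq_egf Fgf_eq_egf
  by (rule egf_binomial_mult[OF Q weight_enum_binomial_total_forest])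

lemma fps_deriv_egf_forests:
  "fps_deriv (egf (\<lambda>n. weight_enum k Ps is_forest {1..n})) =
    fps_deriv (Tgf k Ps) * (egf (\<lambda>n. weight_enum k Ps is_forest {1..n}) :: 'a poly fps)"
  unfolding Tgf_eq_egf fps_deriv_egf[OF Q]
  by (rule egf_binomial_mult[OF Q weight_enum_binomial_forest_Suc])

end

theorem theorem5p11:
  fixes k :: nat and Ps :: "nat set"
  assumes Q_alg: "\<forall>n::nat. n > 0 \<longrightarrow> (\<exists>x::'a::comm_ring_1. of_nat n * x = 1)"
  shows "(Pgf k Ps :: 'a poly fps) = Fgf k Ps * fps_exp_of (Tgf k Ps)"
proof -
  let ?G = "egf (\<lambda>n. weight_enum k Ps is_forest {1..n}) :: 'a poly fps"
  let ?T = "Tgf k Ps :: 'a poly fps"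
  have T0: "?T $ 0 = 0"
    unfolding Tgf_eq_egf by (simp add: weight_enum_tree_empty)
  have "?G = fps_exp_of ?T"
  proof (rule fps_ode_unique)
    show "fps_deriv ?G = fps_deriv ?T * ?G"
      by (rule fps_deriv_egf_forests[OF Q_alg])
    show "fps_deriv (fps_exp_of ?T) = fps_deriv ?T * fps_exp_of ?T"
      by (rule fps_deriv_fps_exp_of[OF Q_alg T0])
    show "?G $ 0 = fps_exp_of ?T $ 0"
      by (simp add: fps_exp_of_def weight_enum_forest_empty)
    show "\<And>n (c :: 'a poly). of_nat (Suc n) * c = 0 \<Longrightarrow> c = 0"
      by (rule poly_of_nat_Suc_mult_eq_0[OF Q_alg])
  qed
  then show ?thesis
    using Pgf_eq_Fgf_mult_egf_forests[OF Q_alg] by simp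
qed

end
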